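(* Let $G$ be a finite group such that every nontrivial Sylow subgroup of $G/G'$ is noncyclic, and let $N$ be a normal subgroup of $G$ such that $\eta(G) = \eta(G/N)$. Then $N \le G'$.
   Context: All groups are finite. A cyclic subgroup $C$ of a group $G$ is maximal cyclic if there is no cyclic subgroup $D$ of $G$ with $C < D$. $\eta(G)$ denotes the number of conjugacy classes of maximal cyclic subgroups of $G$. $G'$ is the derived subgroup of $G$. *)

theory Defs
  imports "HOL-Algebra.Algebra"
begin

definition cyclic_subgroup :: "('a, 'b) monoid_scheme \<Rightarrow> 'a set \<Rightarrow> bool" where
  "cyclic_subgroup G C \<longleftrightarrow> (\<exists>x \<in> carrier G. C = generate G {x})"

definition maximal_cyclic :: "('a, 'b) monoid_scheme \<Rightarrow> 'a set \<Rightarrow> bool" where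
  "maximal_cyclic G C \<longleftrightarrow> cyclic_subgroup G C \<and> \<not> (\<exists>D. cyclic_subgroup G D \<and> C \<subset> D)"

definition conj_class_subsets :: "('a, 'b) monoid_scheme \<Rightarrow> 'a set \<Rightarrow> 'a set set" where
  "conj_class_subsets G H = {(\<lambda>h. g \<otimes>\<^bsub>G\<^esub> h \<otimes>\<^bsub>G\<^esub> inv\<^bsub>G\<^esub> g) ` H | g. g \<in> carrier G}"

definition eta :: "('a, 'b) monoid_scheme \<Rightarrow> nat" where
  "eta G = card (conj_class_subsets G ` {C. maximal_cyclic G C})"

definition sylow_subgroup :: "('a, 'b) monoid_scheme \<Rightarrow> nat \<Rightarrow> 'a set \<Rightarrow> bool" where
  "sylow_subgroup G p P \<longleftrightarrow> Factorial_Ring.prime p \<and> subgroup P G \<and>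
     card P = p ^ Factorial_Ring.multiplicity p (order G)"

end

theory Submission
  imports Defs
begin

text \<open>
  If \<open>\<eta>(G) = \<eta>(G/N)\<close>, the map \<open>M \<mapsto> MN/N\<close> induces a map from conjugacy classes of maximal
  cyclic subgroups of \<open>G\<close> onto those of \<open>G/N\<close> (every maximal cyclic subgroup of \<open>G/N\<close> is the
  image of one of \<open>G\<close>); as both sets have the same finite size, it is a bijection. Hence the
  image of a maximal cyclic \<open>\<langle>x\<rangle>\<close> is maximal cyclic, and for \<open>n \<in> N\<close> a maximal cyclic subgroup
  containing \<open>xn\<close> has the same image as \<open>\<langle>x\<rangle>\<close>, so it is conjugate to \<open>\<langle>x\<rangle>\<close>: \<open>xn\<close> is a
  conjugate of a power of \<open>x\<close>.

  In the abelian group \<open>G/G'\<close> this says that the image \<open>\<beta>\<close> of \<open>n\<close> lies in a common cyclic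
  subgroup with every element. If \<open>N \<not>\<subseteq> G'\<close>, some \<open>\<beta> \<noteq> 1\<close>; then for an element \<open>b\<close> of prime
  order \<open>p\<close> in \<open>\<langle>\<beta>\<rangle>\<close>, every element of order \<open>p\<close> lies in \<open>\<langle>b\<rangle>\<close>. An abelian \<open>p\<close>-group
  with a unique subgroup of order \<open>p\<close> is cyclic, so the Sylow \<open>p\<close>-subgroup of \<open>G/G'\<close> is
  nontrivial and cyclic, contradicting the hypothesis.
\<close>

lemma factored_image_eq_if_card_eq:
  assumes factor: "\<forall>x \<in> S. \<forall>y \<in> S. f x = f y \<longrightarrow> h x = h y"
    and fin: "finite (f ` S)" and K: "K \<subseteq> h ` S" and card: "card K = card (f ` S)"
  shows "h ` S = K"
    and "\<And>x y. \<lbrakk>x \<in> S; y \<in> S; h x = h y\<rbrakk> \<Longrightarrow> f x = f y"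
proof -
  define h' where "h' = h \<circ> inv_into S f"
  have h': "h' (f x) = h x" if "x \<in> S" for x
  proof -
    have "inv_into S f (f x) \<in> S" "f (inv_into S f (f x)) = f x"
      using that by (simp_all add: inv_into_into f_inv_into_f)
    then show ?thesis
      unfolding h'_def comp_apply using factor that by blast
  qed
  have img: "h ` S = h' ` f ` S"
    unfolding image_image using h' by simp
  have "card (h ` S) \<le> card K"
    unfolding img card using fin by (rule card_image_le)
  then show hS: "h ` S = K"
    using card_seteq[OF _ K] img fin by (metis finite_imageI)
  have "inj_on h' (f ` S)"
    using fin by (rule eq_card_imp_inj_on) (simp add: img[symmetric] hS card)
  then show "f x = f y" if "x \<in> S" "y \<in> S" "h x = h y" for x y
    using that h' by (metis imageI inj_onD)
qed

lemma prime_torsion_multiple_int: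
  fixes n i j p :: int
  assumes p: "Factorial_Ring.prime p" and i: "n dvd i * p" and j: "n dvd j * p" and nj: "\<not> n dvd j"
  shows "\<exists>u. n dvd i - j * u"
proof -
  have "p dvd n"
    using j nj p by (metis coprime_commute coprime_dvd_mult_left_iff prime_imp_coprime)
  then obtain r where n: "n = p * r"
    by (elim dvdE)
  have "p \<noteq> 0"
    using p by auto
  then have "r dvd i" "r dvd j"
    using i j unfolding n by (simp_all add: mult.commute)
  then obtain i' j' where i': "i = r * i'" and j': "j = r * j'"
    by (elim dvdE)
  have "\<not> p dvd j'"
    using nj unfolding n j' by (simp add: mult.commute)
  then have "coprime j' p"
    using p by (metis coprime_commute prime_imp_coprime)
  then obtain u v where "u * j' + v * p = 1"
    using bezout_int[of j' p] by auto
  then have uv: "1 - u * j' = v * p"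
    by linarith
  have "i - j * (u * i') = r * i' * (1 - u * j')"
    unfolding i' j' by (simp add: algebra_simps)
  also have "\<dots> = n * (i' * v)"
    unfolding uv n by (simp add: algebra_simps)
  finally show ?thesis
    by (metis dvd_triv_left)
qed


section \<open>Conjugates of subsets and maximal cyclic subgroups\<close>

definition conj_set :: "('a, 'b) monoid_scheme \<Rightarrow> 'a \<Rightarrow> 'a set \<Rightarrow> 'a set" where
  "conj_set G g H = (\<lambda>h. g \<otimes>\<^bsub>G\<^esub> h \<otimes>\<^bsub>G\<^esub> inv\<^bsub>G\<^esub> g) ` H"

lemma conj_class_subsets_conv: "conj_class_subsets G H = {conj_set G g H | g. g \<in> carrier G}"
  unfolding conj_class_subsets_def conj_set_def ..

lemma conj_class_subsetsI: "g \<in> carrier G \<Longrightarrow> conj_set G g C \<in> conj_class_subsets G C"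
  unfolding conj_class_subsets_conv by blast

lemma conj_class_subsetsE:
  assumes "D \<in> conj_class_subsets G C"
  obtains g where "g \<in> carrier G" "D = conj_set G g C"
  using assms unfolding conj_class_subsets_conv by blast

context group
begin

lemma conj_hom: "g \<in> carrier G \<Longrightarrow> (\<lambda>h. g \<otimes> h \<otimes> inv g) \<in> hom G G"
  by (auto simp: hom_def m_assoc inv_solve_left inv_solve_left')

lemma conj_set_generate:
  assumes "g \<in> carrier G" "x \<in> carrier G"
  shows "conj_set G g (generate G {x}) = generate G {g \<otimes> x \<otimes> inv g}"
proof -
  interpret conj: group_hom G G "\<lambda>h. g \<otimes> h \<otimes> inv g"
    using conj_hom[OF assms(1)] by unfold_locales
  show ?thesis
    unfolding conj_set_def using conj.generate_img[of "{x}"] assms(2) by simp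
qed

lemma conj_set_mult:
  "\<lbrakk>g \<in> carrier G; h \<in> carrier G; C \<subseteq> carrier G\<rbrakk>
     \<Longrightarrow> conj_set G g (conj_set G h C) = conj_set G (g \<otimes> h) C"
  unfolding conj_set_def image_image
  by (intro image_cong refl) (auto simp: m_assoc inv_mult_group subsetD)

lemma conj_set_one: "C \<subseteq> carrier G \<Longrightarrow> conj_set G \<one> C = C"
  unfolding conj_set_def by (auto simp: subsetD image_iff)

lemma conj_set_inv: "\<lbrakk>g \<in> carrier G; C \<subseteq> carrier G\<rbrakk> \<Longrightarrow> conj_set G (inv g) (conj_set G g C) = C"
  by (simp add: conj_set_mult conj_set_one)

lemma conj_set_psubset:
  assumes "g \<in> carrier G" "D \<subseteq> carrier G" "C \<subset> D"
  shows "conj_set G g C \<subset> conj_set G g D"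
proof -
  have "inj_on (\<lambda>h. g \<otimes> h \<otimes> inv g) D"
    using assms by (intro inj_onI) (auto simp: subsetD)
  then show ?thesis
    unfolding conj_set_def using assms(3) by (rule image_strict_mono)
qed

lemma conj_class_subsets_self:
  assumes "C \<subseteq> carrier G"
  shows "C \<in> conj_class_subsets G C"
proof -
  have "conj_set G \<one> C \<in> conj_class_subsets G C"
    by (rule conj_class_subsetsI[OF one_closed])
  then show ?thesis
    using conj_set_one[OF assms] by (simp only:)
qed

lemma conj_class_subsets_eq:
  assumes "C \<subseteq> carrier G" "D \<in> conj_class_subsets G C"
  shows "conj_class_subsets G D = conj_class_subsets G C"
proof -
  obtain g where g: "g \<in> carrier G" "D = conj_set G g C"
    using assms(2) by (rule conj_class_subsetsE)
  have "\<exists>h' \<in> carrier G. conj_set G h D = conj_set G h' C" if "h \<in> carrier G" for h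
    using that g assms(1) by (intro bexI[of _ "h \<otimes> g"]) (simp_all add: conj_set_mult)
  moreover have "\<exists>h' \<in> carrier G. conj_set G h C = conj_set G h' D" if "h \<in> carrier G" for h
    using that g assms(1) by (intro bexI[of _ "h \<otimes> inv g"]) (simp_all add: conj_set_mult m_assoc)
  ultimately show ?thesis
    unfolding conj_class_subsets_conv by (intro equalityI subsetI) (clarsimp, metis)+
qed

lemma cyclic_subgroup_subset_carrier: "cyclic_subgroup G C \<Longrightarrow> C \<subseteq> carrier G"
  unfolding cyclic_subgroup_def using generate_incl by blast

lemma cyclic_subgroup_conj_set:
  "\<lbrakk>g \<in> carrier G; cyclic_subgroup G C\<rbrakk> \<Longrightarrow> cyclic_subgroup G (conj_set G g C)"
  unfolding cyclic_subgroup_def using conj_set_generate by (metis m_closed inv_closed)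

lemma maximal_cyclic_conj_set:
  assumes g: "g \<in> carrier G" and C: "maximal_cyclic G C"
  shows "maximal_cyclic G (conj_set G g C)"
  unfolding maximal_cyclic_def
proof (intro conjI notI)
  have "cyclic_subgroup G C"
    using C unfolding maximal_cyclic_def by blast
  with g show "cyclic_subgroup G (conj_set G g C)"
    by (rule cyclic_subgroup_conj_set)
  assume "\<exists>D. cyclic_subgroup G D \<and> conj_set G g C \<subset> D"
  then obtain D where D: "cyclic_subgroup G D" "conj_set G g C \<subset> D"
    by blast
  have "C \<subset> conj_set G (inv g) D"
    using conj_set_psubset[OF _ _ D(2), of "inv g"] D(1) g \<open>cyclic_subgroup G C\<close>
    by (simp add: conj_set_inv cyclic_subgroup_subset_carrier)
  moreover have "cyclic_subgroup G (conj_set G (inv g) D)"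
    using D(1) g by (simp add: cyclic_subgroup_conj_set)
  ultimately show False
    using C unfolding maximal_cyclic_def by blast
qed

lemma maximal_cyclic_exists:
  assumes "finite (carrier G)" "x \<in> carrier G"
  shows "\<exists>M. maximal_cyclic G M \<and> generate G {x} \<subseteq> M"
proof -
  let ?A = "{C. cyclic_subgroup G C \<and> generate G {x} \<subseteq> C}"
  have "?A \<subseteq> Pow (carrier G)"
    using cyclic_subgroup_subset_carrier by blast
  then have "finite ?A"
    using assms(1) by (simp add: finite_subset)
  moreover have "generate G {x} \<in> ?A"
    using assms(2) unfolding cyclic_subgroup_def by blast
  ultimately obtain M where M: "M \<in> ?A" "\<forall>D \<in> ?A. M \<subseteq> D \<longrightarrow> M = D"
    using finite_has_maximal2[of ?A "generate G {x}"] by auto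
  then have "maximal_cyclic G M"
    unfolding maximal_cyclic_def by blast
  with M(1) show ?thesis
    by blast
qed

lemma finite_maximal_cyclic: "finite (carrier G) \<Longrightarrow> finite {C. maximal_cyclic G C}"
  unfolding maximal_cyclic_def
  by (rule finite_subset[of _ "Pow (carrier G)"]) (auto dest: cyclic_subgroup_subset_carrier)

end


section \<open>Maximal cyclic subgroups of a quotient\<close>

context normal
begin

lemma rcos_hom: "group_hom G (G Mod H) ((#>) H)"
  by (intro group_hom.intro group_hom_axioms.intro is_group factorgroup_is_group r_coset_hom_Mod)

lemma finite_quotient: "finite (carrier G) \<Longrightarrow> finite (carrier (G Mod H))"
  unfolding FactGroup_def RCOSETS_def by simp

lemma rcos_image_generate:
  assumes "x \<in> carrier G"
  shows "(#>) H ` generate G {x} = generate (G Mod H) {H #> x}"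
  using group_hom.generate_img[OF rcos_hom, of "{x}"] assms
  by (simp only: image_insert image_empty empty_subsetI insert_subset)

lemma rcos_image_conj_set:
  assumes "g \<in> carrier G" "C \<subseteq> carrier G"
  shows "(#>) H ` conj_set G g C = conj_set (G Mod H) (H #> g) ((#>) H ` C)"
proof -
  interpret \<pi>: group_hom G "G Mod H" "(#>) H"
    by (rule rcos_hom)
  have "H #> (g \<otimes> c \<otimes> inv g)
      = (H #> g) \<otimes>\<^bsub>G Mod H\<^esub> (H #> c) \<otimes>\<^bsub>G Mod H\<^esub> inv\<^bsub>G Mod H\<^esub> (H #> g)"
    if "c \<in> C" for c
  proof -
    have "c \<in> carrier G"
      using assms(2) that by blast
    then show ?thesis
      using assms(1) by (simp only: \<pi>.hom_mult \<pi>.hom_inv m_closed inv_closed)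
  qed
  then show ?thesis
    unfolding conj_set_def image_image by (rule image_cong[OF refl])
qed

lemma cyclic_subgroup_rcos_image:
  assumes "cyclic_subgroup G M"
  shows "cyclic_subgroup (G Mod H) ((#>) H ` M)"
proof -
  obtain x where x: "x \<in> carrier G" "M = generate G {x}"
    using assms unfolding cyclic_subgroup_def by blast
  then have "H #> x \<in> carrier (G Mod H)"
    by (simp add: group_hom.hom_closed[OF rcos_hom])
  with x show ?thesis
    unfolding cyclic_subgroup_def using rcos_image_generate[OF x(1)] by blast
qed

lemma conj_class_subsets_rcos_image:
  assumes "C \<subseteq> carrier G" "D \<in> conj_class_subsets G C"
  shows "conj_class_subsets (G Mod H) ((#>) H ` D) = conj_class_subsets (G Mod H) ((#>) H ` C)"
proof -
  interpret \<pi>: group_hom G "G Mod H" "(#>) H"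
    by (rule rcos_hom)
  obtain g where g: "g \<in> carrier G" "D = conj_set G g C"
    using assms(2) by (rule conj_class_subsetsE)
  have "(#>) H ` D \<in> conj_class_subsets (G Mod H) ((#>) H ` C)"
    unfolding g(2) rcos_image_conj_set[OF g(1) assms(1)]
    by (rule conj_class_subsetsI[OF \<pi>.hom_closed[OF g(1)]])
  moreover have "(#>) H ` C \<subseteq> carrier (G Mod H)"
    using assms(1) by (auto intro: \<pi>.hom_closed)
  ultimately show ?thesis
    by (intro \<pi>.H.conj_class_subsets_eq)
qed

lemma maximal_cyclic_quotient_is_image:
  assumes fin: "finite (carrier G)" and D: "maximal_cyclic (G Mod H) D"
  shows "\<exists>M. maximal_cyclic G M \<and> D = (#>) H ` M"
proof -
  obtain q where q: "q \<in> carrier (G Mod H)" "D = generate (G Mod H) {q}"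
    using D unfolding maximal_cyclic_def cyclic_subgroup_def by blast
  then obtain x where x: "x \<in> carrier G" "q = H #> x"
    unfolding FactGroup_def RCOSETS_def by (auto simp only: partial_object.select_convs)
  obtain M where M: "maximal_cyclic G M" "generate G {x} \<subseteq> M"
    using maximal_cyclic_exists[OF fin x(1)] by blast
  have "D \<subseteq> (#>) H ` M"
    using M(2) rcos_image_generate[OF x(1)] q(2) x(2) by blast
  moreover have "cyclic_subgroup (G Mod H) ((#>) H ` M)"
    using M(1) cyclic_subgroup_rcos_image unfolding maximal_cyclic_def by blast
  ultimately have "D = (#>) H ` M"
    using D unfolding maximal_cyclic_def by blast
  with M(1) show ?thesis
    by blast
qed

lemma eta_eq_conj_class_map:
  assumes fin: "finite (carrier G)" and eta: "eta G = eta (G Mod H)"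
  shows "(\<lambda>M. conj_class_subsets (G Mod H) ((#>) H ` M)) ` {C. maximal_cyclic G C}
           = conj_class_subsets (G Mod H) ` {D. maximal_cyclic (G Mod H) D}"
    and "\<lbrakk>maximal_cyclic G M1; maximal_cyclic G M2;
          conj_class_subsets (G Mod H) ((#>) H ` M1) = conj_class_subsets (G Mod H) ((#>) H ` M2)\<rbrakk>
           \<Longrightarrow> conj_class_subsets G M1 = conj_class_subsets G M2"
proof -
  let ?S = "{C. maximal_cyclic G C}"
  let ?cl = "\<lambda>M. conj_class_subsets (G Mod H) ((#>) H ` M)"
  let ?K = "conj_class_subsets (G Mod H) ` {D. maximal_cyclic (G Mod H) D}"
  have carrier: "M \<subseteq> carrier G" if "M \<in> ?S" for M
    using that unfolding maximal_cyclic_def by (auto dest: cyclic_subgroup_subset_carrier)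
  have factor: "\<forall>M1 \<in> ?S. \<forall>M2 \<in> ?S.
      conj_class_subsets G M1 = conj_class_subsets G M2 \<longrightarrow> ?cl M1 = ?cl M2"
  proof (intro ballI impI)
    fix M1 M2
    assume M: "M1 \<in> ?S" "M2 \<in> ?S" "conj_class_subsets G M1 = conj_class_subsets G M2"
    have "M2 \<in> conj_class_subsets G M1"
      using M(3) conj_class_subsets_self[OF carrier[OF M(2)]] by (simp only:)
    then show "?cl M1 = ?cl M2"
      by (rule conj_class_subsets_rcos_image[OF carrier[OF M(1)], symmetric])
  qed
  have covered: "?K \<subseteq> ?cl ` ?S"
    using maximal_cyclic_quotient_is_image[OF fin] by blast
  have card: "card ?K = card (conj_class_subsets G ` ?S)"
    using eta unfolding eta_def by simp
  note class_map = factored_image_eq_if_card_eq[OF factor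
      finite_imageI[OF finite_maximal_cyclic[OF fin]] covered card]
  show "?cl ` ?S = ?K"
    by (rule class_map(1))
  show "conj_class_subsets G M1 = conj_class_subsets G M2"
    if "maximal_cyclic G M1" "maximal_cyclic G M2" "?cl M1 = ?cl M2"
    using that by (intro class_map(2)) (simp_all only: mem_Collect_eq)
qed

lemma maximal_cyclic_rcos_image:
  assumes fin: "finite (carrier G)" and eta: "eta G = eta (G Mod H)"
    and M: "maximal_cyclic G M"
  shows "maximal_cyclic (G Mod H) ((#>) H ` M)"
proof -
  interpret Q: group "G Mod H"
    by (rule factorgroup_is_group)
  obtain D where D: "maximal_cyclic (G Mod H) D"
    "conj_class_subsets (G Mod H) ((#>) H ` M) = conj_class_subsets (G Mod H) D"
    using eta_eq_conj_class_map(1)[OF fin eta] M by blast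
  have "(#>) H ` M \<subseteq> carrier (G Mod H)"
    using M unfolding maximal_cyclic_def
    by (auto dest: cyclic_subgroup_rcos_image Q.cyclic_subgroup_subset_carrier)
  then have "(#>) H ` M \<in> conj_class_subsets (G Mod H) D"
    unfolding D(2)[symmetric] by (rule Q.conj_class_subsets_self)
  then obtain q where q: "q \<in> carrier (G Mod H)" "(#>) H ` M = conj_set (G Mod H) q D"
    by (rule conj_class_subsetsE)
  show ?thesis
    unfolding q(2) by (rule Q.maximal_cyclic_conj_set[OF q(1) D(1)])
qed

lemma conj_if_rcos_image_eq:
  assumes fin: "finite (carrier G)" and eta: "eta G = eta (G Mod H)"
    and M: "maximal_cyclic G M1" "maximal_cyclic G M2" "(#>) H ` M1 = (#>) H ` M2"
  shows "M2 \<in> conj_class_subsets G M1"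
proof -
  have "conj_class_subsets G M1 = conj_class_subsets G M2"
    using M(1,2) by (rule eta_eq_conj_class_map(2)[OF fin eta]) (simp only: M(3))
  moreover have "M2 \<subseteq> carrier G"
    using M(2) unfolding maximal_cyclic_def by (auto dest: cyclic_subgroup_subset_carrier)
  ultimately show ?thesis
    using conj_class_subsets_self by (simp only:)
qed

lemma mult_conj_pow_if_eta_eq:
  assumes fin: "finite (carrier G)" and eta: "eta G = eta (G Mod H)"
    and x: "x \<in> carrier G" and M: "maximal_cyclic G (generate G {x})" and n: "n \<in> H"
  shows "\<exists>g \<in> carrier G. \<exists>k::int. x \<otimes> n = g \<otimes> x [^] k \<otimes> inv g"
proof -
  have xn: "x \<otimes> n \<in> carrier G"
    using x n by simp
  obtain M' where M': "maximal_cyclic G M'" "generate G {x \<otimes> n} \<subseteq> M'"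
    using maximal_cyclic_exists[OF fin xn] by blast
  have "x \<otimes> n \<in> x <# H"
    using n unfolding l_coset_def by blast
  then have "H #> (x \<otimes> n) = H #> x"
    using coset_eq x repr_independence[OF _ x subgroup_axioms] by (metis (no_types))
  then have "(#>) H ` generate G {x} \<subseteq> (#>) H ` M'"
    using M'(2) rcos_image_generate[OF x] rcos_image_generate[OF xn] by (metis image_mono)
  moreover have "maximal_cyclic (G Mod H) ((#>) H ` generate G {x})"
    by (rule maximal_cyclic_rcos_image[OF fin eta M])
  moreover have "cyclic_subgroup (G Mod H) ((#>) H ` M')"
    using M'(1) cyclic_subgroup_rcos_image unfolding maximal_cyclic_def by blast
  ultimately have "(#>) H ` generate G {x} = (#>) H ` M'"
    unfolding maximal_cyclic_def by blast
  then have "M' \<in> conj_class_subsets G (generate G {x})"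
    by (rule conj_if_rcos_image_eq[OF fin eta M M'(1)])
  then obtain g where g: "g \<in> carrier G" "M' = conj_set G g (generate G {x})"
    by (rule conj_class_subsetsE)
  have "x \<otimes> n \<in> M'"
    using M'(2) generate.incl[of "x \<otimes> n" "{x \<otimes> n}" G] by blast
  then obtain k :: int where "x \<otimes> n = g \<otimes> x [^] k \<otimes> inv g"
    unfolding g(2) conj_set_def generate_pow[OF x] by blast
  with g(1) show ?thesis
    by blast
qed

end


section \<open>Cyclic Sylow subgroups of finite abelian groups\<close>

context group
begin

lemma mem_generate_singleton_iff:
  "x \<in> carrier G \<Longrightarrow> y \<in> generate G {x} \<longleftrightarrow> (\<exists>k::int. y = x [^] k)"
  by (simp add: generate_pow)

lemma prime_torsion_in_generate:
  fixes p :: nat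
  assumes p: "Factorial_Ring.prime p" and \<xi>: "\<xi> \<in> carrier G"
    and z: "z \<in> generate G {\<xi>}" "z [^] p = \<one>"
    and w: "w \<in> generate G {\<xi>}" "w [^] p = \<one>" "w \<noteq> \<one>"
  shows "z \<in> generate G {w}"
proof -
  obtain i where i: "z = \<xi> [^] (i::int)"
    using z(1) \<xi> by (auto simp: mem_generate_singleton_iff)
  obtain j where j: "w = \<xi> [^] (j::int)"
    using w(1) \<xi> by (auto simp: mem_generate_singleton_iff)
  have "\<xi> [^] (i * int p) = \<one>" "\<xi> [^] (j * int p) = \<one>"
    using z(2) w(2) \<xi> unfolding i j by (simp_all add: int_pow_pow flip: int_pow_int)
  then have "int (ord \<xi>) dvd i * int p" "int (ord \<xi>) dvd j * int p"
    using \<xi> by (simp_all add: int_pow_eq_id)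
  moreover have "\<not> int (ord \<xi>) dvd j"
    using w(3) \<xi> unfolding j by (simp add: int_pow_eq_id)
  moreover have "Factorial_Ring.prime (int p)"
    using p by simp
  ultimately obtain u where "int (ord \<xi>) dvd i - j * u"
    using prime_torsion_multiple_int by blast
  then have "int (ord \<xi>) dvd j * u - i"
    by (simp add: dvd_diff_commute)
  then have "z = w [^] u"
    using \<xi> unfolding i j by (simp add: int_pow_pow int_pow_eq)
  then show ?thesis
    using \<xi> j by (auto simp: mem_generate_singleton_iff)
qed

lemma generate_subset_if_prime_torsion:
  fixes p :: nat
  assumes p: "Factorial_Ring.prime p" and x: "x \<in> carrier G" "ord x = p ^ Suc m"
    and b: "b \<in> carrier G" "b [^] p = \<one>"
    and tors: "\<And>z. \<lbrakk>z \<in> carrier G; z [^] p = \<one>\<rbrakk> \<Longrightarrow> z \<in> generate G {b}"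
  shows "generate G {b} \<subseteq> generate G {x}"
proof -
  define w where "w = x [^] (p ^ m)"
  have w_carrier: "w \<in> carrier G"
    unfolding w_def using x(1) by simp
  have "ord w = p"
    unfolding w_def using x p by (subst ord_pow) (simp_all add: prime_gt_0_nat)
  then have w: "w [^] p = \<one>" "w \<noteq> \<one>"
    using pow_ord_eq_1[OF w_carrier] ord_eq_1[OF w_carrier] p by auto
  have "b \<in> generate G {w}"
    using prime_torsion_in_generate[OF p b(1) generate.incl[of b] b(2) tors[OF w_carrier w(1)] w]
    by simp
  moreover have "w \<in> generate G {x}"
    unfolding w_def using x(1) by (metis int_pow_int mem_generate_singleton_iff)
  then have "generate G {w} \<subseteq> generate G {x}"
    using x(1) by (intro generate_subgroup_incl generate_is_subgroup) auto
  ultimately show ?thesis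
    using x(1) by (intro generate_subgroup_incl generate_is_subgroup) auto
qed

lemma prime_dvd_exponent_if_pow_eq:
  fixes p :: nat
  assumes p: "Factorial_Ring.prime p" and x: "x \<in> carrier G" "ord x = p ^ Suc m"
    and y: "y \<in> carrier G" "y [^] (p ^ Suc m) = \<one>" "y [^] p = x [^] (j::int)"
  shows "int p dvd j"
proof -
  have "x [^] (j * int (p ^ m)) = (x [^] j) [^] int (p ^ m)"
    using x(1) by (simp add: int_pow_pow)
  also have "\<dots> = (y [^] p) [^] (p ^ m)"
    by (simp only: y(3)[symmetric] int_pow_int)
  also have "\<dots> = \<one>"
    using y(1,2) by (simp add: nat_pow_pow)
  finally have "int p * int (p ^ m) dvd j * int (p ^ m)"
    using x by (simp add: int_pow_eq_id)
  then show ?thesis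
    using p by (simp add: prime_gt_0_nat)
qed

lemma cyclic_group_generate:
  assumes "x \<in> carrier G"
  shows "cyclic_group (subgroup_generated G (generate G {x}))"
proof -
  interpret gen: subgroup "generate G {x}" G
    using assms by (simp add: generate_is_subgroup)
  have "carrier (subgroup_generated G (generate G {x})) = generate G {x}"
    by (rule gen.carrier_subgroup_generated_subgroup)
  also have "\<dots> = carrier (subgroup_generated G {x})"
    using assms by (simp add: carrier_subgroup_generated)
  finally have "subgroup_generated G (generate G {x}) = subgroup_generated G {x}"
    by (simp add: subgroup_generated_def)
  then show ?thesis
    by (simp add: cyclic_group_generated)
qed

lemma prime_power_subgroup_exponent:
  fixes p :: nat
  assumes p: "Factorial_Ring.prime p" and P: "subgroup P G" "finite P" "card P = p ^ a"
  shows "\<exists>x \<in> P. \<exists>m. ord x = p ^ m \<and> (\<forall>y \<in> P. y [^] (p ^ m) = \<one>)"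
proof -
  interpret P: subgroup P G
    by (fact P(1))
  have ord_dvd: "ord y dvd p ^ a" if "y \<in> P" for y
  proof -
    interpret PG: group "G\<lparr>carrier := P\<rparr>"
      by (rule subgroup_imp_group[OF P(1)])
    have "y [^] card P = \<one>"
      using PG.pow_order_eq_1[of y] that unfolding order_def
      by (simp add: nat_pow_consistent[symmetric])
    then show ?thesis
      using that P(3) by (simp add: pow_eq_id)
  qed
  obtain x where x: "x \<in> P" "\<forall>y \<in> P. ord y \<le> ord x"
    using finite_has_maximal[of "ord ` P"] P(2) P.one_closed
    by (metis (no_types, lifting) empty_iff finite_imageI imageE image_eqI le_cases)
  obtain m where m: "ord x = p ^ m"
    using ord_dvd[OF x(1)] p by (auto simp: divides_primepow_nat)
  have "y [^] (p ^ m) = \<one>" if y: "y \<in> P" for y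
  proof -
    obtain s where s: "ord y = p ^ s"
      using ord_dvd[OF y] p by (auto simp: divides_primepow_nat)
    then have "s \<le> m"
      using x(2) y m p by (metis power_le_imp_le_exp prime_gt_1_nat)
    then have "ord y dvd p ^ m"
      unfolding s by (rule le_imp_power_dvd)
    then show ?thesis
      using y by (simp add: pow_eq_id)
  qed
  with x(1) m show ?thesis
    by blast
qed

lemma nontrivial_sylow_subgroup_exists:
  fixes p :: nat
  assumes fin: "finite (carrier G)" and p: "Factorial_Ring.prime p" and dvd: "p dvd order G"
  shows "\<exists>P. sylow_subgroup G p P \<and> 1 < card P"
proof -
  define a where "a = multiplicity p (order G)"
  have "order G = p ^ a * (order G div p ^ a)"
    unfolding a_def by (simp add: multiplicity_dvd)
  then obtain P where P: "subgroup P G" "card P = p ^ a"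
    using sylow_thm[OF p is_group _ fin] by blast
  have "order G \<noteq> 0"
    using fin order_gt_0_iff_finite by blast
  then have "0 < a"
    unfolding a_def using dvd p by (simp add: prime_multiplicity_gt_zero_iff)
  then have "1 < card P"
    unfolding P(2) using p by (metis one_less_power prime_gt_1_nat)
  moreover have "sylow_subgroup G p P"
    unfolding sylow_subgroup_def a_def[symmetric] using p P by simp
  ultimately show ?thesis
    by blast
qed

end

context comm_group
begin

lemma in_generate_if_mult_conj_pow:
  assumes x: "x \<in> carrier G" and n: "n \<in> carrier G" and g: "g \<in> carrier G"
    and eq: "x \<otimes> n = g \<otimes> x [^] (k::int) \<otimes> inv g"
  shows "n \<in> generate G {x}"
proof -
  have "x \<otimes> n = x [^] k"
    using eq x g by (simp add: m_comm[of g] m_assoc)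
  then have n_eq: "n = inv x \<otimes> x [^] k"
    using x n by (simp add: inv_solve_left)
  have "inv x \<in> generate G {x}"
    by (rule generate.inv) simp
  moreover have "x [^] k \<in> generate G {x}"
    using x by (auto simp: mem_generate_singleton_iff)
  ultimately show ?thesis
    unfolding n_eq by (rule generate.eng)
qed

lemma primary_torsion_in_generate:
  fixes p :: nat
  assumes p: "Factorial_Ring.prime p" and x: "x \<in> carrier G" "ord x = p ^ m"
    and tors: "\<And>z. \<lbrakk>z \<in> carrier G; z [^] p = \<one>\<rbrakk> \<Longrightarrow> z \<in> generate G {x}"
    and y: "y \<in> carrier G" "y [^] (p ^ m) = \<one>"
  shows "y \<in> generate G {x}"
proof -
  have "y \<in> generate G {x}" if "y \<in> carrier G" "y [^] (p ^ m) = \<one>" "y [^] (p ^ s) = \<one>" for s y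
    using that
  proof (induction s arbitrary: y)
    case 0
    then show ?case
      using generate.one by simp
  next
    case (Suc s)
    have "(y [^] p) [^] (p ^ m) = (y [^] (p ^ m)) [^] p"
      using Suc.prems(1) by (simp add: nat_pow_pow mult.commute)
    moreover have "(y [^] p) [^] (p ^ s) = y [^] (p ^ Suc s)"
      using Suc.prems(1) by (simp add: nat_pow_pow)
    ultimately have "y [^] p \<in> generate G {x}"
      using Suc.prems by (intro Suc.IH) simp_all
    then obtain j :: int where j: "y [^] p = x [^] j"
      using x(1) by (auto simp: mem_generate_singleton_iff)
    show ?case
    proof (cases m)
      case 0
      then show ?thesis
        using Suc.prems generate.one by simp
    next
      case (Suc m')
      then obtain j' where j': "j = int p * j'"
        using prime_dvd_exponent_if_pow_eq[OF p x(1) _ Suc.prems(1) _ j] x(2) Suc.prems(2)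
        by (auto elim: dvdE)
      \<comment> \<open>\<open>y x\<^sup>-\<^sup>j\<^sup>'\<close> has order dividing \<open>p\<close>, hence lies in \<open>\<langle>x\<rangle>\<close>, and so does \<open>y\<close>.\<close>
      define z where "z = y \<otimes> inv (x [^] j')"
      have "z [^] int p = y [^] int p \<otimes> inv (x [^] j') [^] int p"
        unfolding z_def using x(1) Suc.prems(1) by (simp add: int_pow_distrib)
      also have "\<dots> = x [^] j \<otimes> inv (x [^] j)"
        using x(1) j unfolding j'
        by (simp del: int_pow_int add: int_pow_inv int_pow_pow mult.commute flip: int_pow_int)
      finally have "z [^] p = \<one>"
        using x(1) by (simp add: int_pow_int)
      then have "z \<in> generate G {x}"
        using tors x(1) Suc.prems(1) unfolding z_def by simp
      moreover have "y = z \<otimes> x [^] j'"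
        unfolding z_def using x(1) Suc.prems(1) by (simp add: m_assoc)
      moreover have "x [^] j' \<in> generate G {x}"
        using x(1) by (auto simp: mem_generate_singleton_iff)
      ultimately show ?thesis
        by (metis generate.eng)
    qed
  qed
  then show ?thesis
    using y by blast
qed

lemma cyclic_sylow_if_prime_torsion_cyclic:
  fixes p :: nat
  assumes fin: "finite (carrier G)" and p: "Factorial_Ring.prime p"
    and b: "b \<in> carrier G" "b \<noteq> \<one>" "b [^] p = \<one>"
    and tors: "\<And>z. \<lbrakk>z \<in> carrier G; z [^] p = \<one>\<rbrakk> \<Longrightarrow> z \<in> generate G {b}"
  shows "\<exists>P. sylow_subgroup G p P \<and> 1 < card P \<and> cyclic_group (subgroup_generated G P)"
proof -
  have "ord b dvd p" "ord b \<noteq> 1"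
    using b pow_eq_id ord_eq_1 by blast+
  then have "ord b = p"
    using p unfolding prime_nat_iff by blast
  then obtain P where P: "sylow_subgroup G p P" "1 < card P"
    using nontrivial_sylow_subgroup_exists[OF fin p] ord_dvd_group_order[OF b(1)] by auto
  then have P_sub: "subgroup P G" "card P = p ^ multiplicity p (order G)"
    unfolding sylow_subgroup_def by simp_all
  have "finite P"
    using fin subgroup.subset[OF P_sub(1)] by (rule finite_subset[rotated])
  then obtain x m where x: "x \<in> P" "ord x = p ^ m" "\<forall>y \<in> P. y [^] (p ^ m) = \<one>"
    using prime_power_subgroup_exponent[OF p P_sub(1) _ P_sub(2)] by blast
  have x_carrier: "x \<in> carrier G"
    using x(1) subgroup.subset[OF P_sub(1)] by blast
  obtain m' where m': "m = Suc m'"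
  proof (cases m)
    case 0
    then have "P \<subseteq> {\<one>}"
      using x(3) subgroup.mem_carrier[OF P_sub(1)] by (metis nat_pow_eone power_0 singletonI subsetI)
    then show ?thesis
      using P(2) card_mono[of "{\<one>}" P] by simp
  qed (rule that)
  have "generate G {b} \<subseteq> generate G {x}"
    using generate_subset_if_prime_torsion[OF p x_carrier x(2)[unfolded m'] b(1,3) tors] .
  then have "P \<subseteq> generate G {x}"
    using primary_torsion_in_generate[OF p x_carrier x(2)] tors x(3) subgroup.subset[OF P_sub(1)]
    by blast
  moreover have "generate G {x} \<subseteq> P"
    using x(1) by (intro generate_subgroup_incl P_sub(1)) simp
  ultimately have "P = generate G {x}"
    by (rule antisym)
  then show ?thesis
    using P cyclic_group_generate[OF x_carrier] by auto
qed

lemma cyclic_sylow_if_shares_cyclic_subgroups: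
  assumes fin: "finite (carrier G)" and \<beta>: "\<beta> \<in> carrier G" "\<beta> \<noteq> \<one>"
    and share: "\<And>\<alpha>. \<alpha> \<in> carrier G \<Longrightarrow> \<exists>\<xi> \<in> carrier G. \<alpha> \<in> generate G {\<xi>} \<and> \<beta> \<in> generate G {\<xi>}"
  shows "\<exists>p P. sylow_subgroup G p P \<and> 1 < card P \<and> cyclic_group (subgroup_generated G P)"
proof -
  obtain p where p: "Factorial_Ring.prime p" "p dvd ord \<beta>"
    using \<beta> ord_eq_1 prime_factor_nat by metis
  have "ord \<beta> \<noteq> 0"
    using ord_ge_1[OF fin \<beta>(1)] by simp
  define b where "b = \<beta> [^] (ord \<beta> div p)"
  have b_carrier: "b \<in> carrier G"
    unfolding b_def using \<beta>(1) by simp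
  have "ord b = p"
    unfolding b_def using \<beta>(1) p \<open>ord \<beta> \<noteq> 0\<close>
    by (subst ord_pow) (auto elim!: dvdE simp: prime_gt_0_nat)
  then have b: "b \<in> carrier G" "b \<noteq> \<one>" "b [^] p = \<one>"
    using b_carrier pow_ord_eq_1[OF b_carrier] ord_eq_1[OF b_carrier] p by auto
  have "z \<in> generate G {b}" if z: "z \<in> carrier G" "z [^] p = \<one>" for z
  proof -
    obtain \<xi> where \<xi>: "\<xi> \<in> carrier G" "z \<in> generate G {\<xi>}" "\<beta> \<in> generate G {\<xi>}"
      using share[OF z(1)] by blast
    have "b \<in> generate G {\<xi>}"
      unfolding b_def using subgroup_int_pow_closed[OF generate_is_subgroup \<xi>(3)] \<xi>(1)
      by (simp flip: int_pow_int)
    then show ?thesis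
      using prime_torsion_in_generate[OF p(1) \<xi>(1,2) z(2) _ b(3,2)] by blast
  qed
  then show ?thesis
    using cyclic_sylow_if_prime_torsion_cyclic[OF fin p(1) b] by blast
qed

end


section \<open>Elements of N in an abelian quotient\<close>

lemma (in group) abelian_quotient_shares_cyclic_subgroup:
  assumes fin: "finite (carrier G)" and N: "N \<lhd> G" and eta: "eta G = eta (G Mod N)"
    and K: "K \<lhd> G" "comm_group (G Mod K)" and n: "n \<in> N" and \<alpha>: "\<alpha> \<in> carrier (G Mod K)"
  shows "\<exists>\<xi> \<in> carrier (G Mod K). \<alpha> \<in> generate (G Mod K) {\<xi>} \<and> K #> n \<in> generate (G Mod K) {\<xi>}"
proof -
  interpret N: normal N G
    by (fact N)
  interpret K: normal K G
    by (fact K(1))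
  interpret Q: comm_group "G Mod K"
    by (fact K(2))
  interpret \<pi>: group_hom G "G Mod K" "(#>) K"
    by (rule K.rcos_hom)
  obtain a where a: "a \<in> carrier G" "\<alpha> = K #> a"
    using \<alpha> unfolding FactGroup_def RCOSETS_def by (auto simp only: partial_object.select_convs)
  obtain M where M: "maximal_cyclic G M" "generate G {a} \<subseteq> M"
    using maximal_cyclic_exists[OF fin a(1)] by blast
  then obtain x where x: "x \<in> carrier G" "M = generate G {x}"
    unfolding maximal_cyclic_def cyclic_subgroup_def by blast
  have n_carrier: "n \<in> carrier G"
    using n N.subset by blast
  obtain g k where g: "g \<in> carrier G" "x \<otimes> n = g \<otimes> x [^] (k::int) \<otimes> inv g"
    using N.mult_conj_pow_if_eta_eq[OF fin eta x(1) M(1)[unfolded x(2)] n] by blast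
  then have "(K #> x) \<otimes>\<^bsub>G Mod K\<^esub> (K #> n)
      = (K #> g) \<otimes>\<^bsub>G Mod K\<^esub> (K #> x) [^]\<^bsub>G Mod K\<^esub> k \<otimes>\<^bsub>G Mod K\<^esub> inv\<^bsub>G Mod K\<^esub> (K #> g)"
    using x(1) n_carrier
    by (simp only: \<pi>.hom_mult[symmetric] \<pi>.hom_int_pow[symmetric] \<pi>.hom_inv[symmetric]
        m_closed int_pow_closed inv_closed)
  then have "K #> n \<in> generate (G Mod K) {K #> x}"
    using x(1) n_carrier g(1) by (intro Q.in_generate_if_mult_conj_pow) (simp_all only: \<pi>.hom_closed)
  moreover have "\<alpha> \<in> generate (G Mod K) {K #> x}"
    unfolding a(2) K.rcos_image_generate[OF x(1), symmetric] x(2)[symmetric]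
    using M(2) generate.incl[of a "{a}" G] by blast
  ultimately show ?thesis
    using \<pi>.hom_closed[OF x(1)] by blast
qed

theorem theorem1p2:
  fixes G :: "('a, 'b) monoid_scheme" and N :: "'a set"
  assumes "group G"
    and "finite (carrier G)"
    and "\<forall>p P. sylow_subgroup (G Mod derived G (carrier G)) p P \<and> card P > 1
             \<longrightarrow> \<not> cyclic_group (subgroup_generated (G Mod derived G (carrier G)) P)"
    and "N \<lhd> G"
    and "eta G = eta (G Mod N)"
  shows "N \<subseteq> derived G (carrier G)"
proof (rule ccontr)
  interpret G: group G
    by fact
  let ?D = "derived G (carrier G)"
  interpret D: normal ?D G
    by (rule G.derived_self_is_normal)
  interpret Q: comm_group "G Mod ?D"
    by (rule G.derived_quot_is_comm_group)
  assume "\<not> N \<subseteq> ?D"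
  then obtain n where n: "n \<in> N" "n \<notin> ?D"
    by blast
  have n_carrier: "n \<in> carrier G"
    using n(1) assms(4) normal_imp_subgroup subgroup.subset by blast
  have "?D #>\<^bsub>G\<^esub> n \<in> carrier (G Mod ?D)"
    using n_carrier by (rule group_hom.hom_closed[OF D.rcos_hom])
  moreover have "?D #>\<^bsub>G\<^esub> n \<noteq> \<one>\<^bsub>G Mod ?D\<^esub>"
    using n(2) G.coset_join1[OF _ n_carrier D.subgroup_axioms] by auto
  ultimately obtain p P where
    "sylow_subgroup (G Mod ?D) p P" "1 < card P" "cyclic_group (subgroup_generated (G Mod ?D) P)"
    using Q.cyclic_sylow_if_shares_cyclic_subgroups[OF D.finite_quotient[OF assms(2)]]
      G.abelian_quotient_shares_cyclic_subgroup[OF assms(2,4,5) D.normal_axioms Q.comm_group_axioms n(1)]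
    by blast
  with assms(3) show False
    by blast
qed

end
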